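(* Fix parameters $(\lambda,\mu,c,r)$ and let $n^*=n^*(\lambda,\mu,c,r)$ be the socially optimal threshold. Under every queuing regime, for every customer whose position in the queue is not larger than $n^*$, staying (rather than reneging) is a weakly dominant action. If $D_{n^*}>0$, then it is strictly dominant.
   Context: Model: an M/M/1 queue with a single server; customers arrive according to a Poisson process with rate $\lambda>0$ and are served at exponential rate $\mu>0$. Each customer incurs cost at rate $c>0$ while in the system and receives reward $r>0$ upon service completion; a customer who reneges gets continuation payoff $0$. A customer's payoff is expected reward minus expected waiting cost. Queuing regime: customers present are ranked in a queue, position $1$ being served (the server always serves someone when the system is non-idle) and the last position at the back. On arrival, the regime places the new customer at some position (possibly depending on a regime state); service completion removes the customer at position $1$; any customer may renege at any time. None of these events changes the relative order of the remaining customers. Definition of $D_n$: for $n\ge1$, let $(y_k)_{k\ge0}$ be the Markov chain on $\{0,\dots,n\}$ with $y_0=n$ and, independently at each step, $y_k=\min(y_{k-1}+1,n)$ with probability $\lambda/(\lambda+\mu)$ and $y_k=\max(y_{k-1}-1,0)$ with probability $\mu/(\lambda+\mu)$. Let $\theta_n$ be the probability that, starting at $y_0=n$, the chain $y_1,y_2,\dots$ reaches $0$ before it reaches $n$, and $T_n$ the expected number of steps until the chain $y_1,y_2,\dots$ reaches $0$ or $n$. Set $D_n=r\,\theta_n-\frac{c}{\lambda+\mu}T_n$; $D_n$ is decreasing in $n$. Social optimum: the designer maximizes the long-run average welfare (reward $r$ per service minus cost $c$ per unit time per customer present) by a threshold policy admitting customers as long as their number is at most a threshold; the optimal threshold $n^*(\lambda,\mu,c,r)$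 satisfies $D_{n^*}\ge0$ and $D_{n^*+1}\le0$. *)

theory Defs
  imports "HOL-Probability.Probability"
begin

definition up_st :: "nat \<Rightarrow> nat \<Rightarrow> nat" where
  "up_st n i = min (i + 1) n"

definition down_st :: "nat \<Rightarrow> nat \<Rightarrow> nat" where
  "down_st n i = max (i - 1) 0"

text \<open>hit0_fin lam mu n N i: probability that the chain started at state i (time 0) has its first
 visit to the set {0,n} at time at most N and that this visit is to 0.\<close>
primrec hit0_fin :: "real \<Rightarrow> real \<Rightarrow> nat \<Rightarrow> nat \<Rightarrow> nat \<Rightarrow> real" where
  "hit0_fin lam mu n 0 i = (if i = 0 then 1 else 0)"
| "hit0_fin lam mu n (Suc N) i =
     (if i = 0 then 1 else if i = n then 0
      else lam / (lam + mu) * hit0_fin lam mu n N (up_st n i)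
         + mu / (lam + mu) * hit0_fin lam mu n N (down_st n i))"

text \<open>steps_fin lam mu n N i: expectation of min(tau, N), tau the hitting time of {0,n} from i.\<close>
primrec steps_fin :: "real \<Rightarrow> real \<Rightarrow> nat \<Rightarrow> nat \<Rightarrow> nat \<Rightarrow> real" where
  "steps_fin lam mu n 0 i = 0"
| "steps_fin lam mu n (Suc N) i =
     (if i = 0 \<or> i = n then 0
      else 1 + lam / (lam + mu) * steps_fin lam mu n N (up_st n i)
             + mu / (lam + mu) * steps_fin lam mu n N (down_st n i))"

text \<open>theta_n: probability that, starting at y_0 = n, the chain y_1, y_2, ... reaches 0 before n.\<close>
definition theta :: "real \<Rightarrow> real \<Rightarrow> nat \<Rightarrow> real" where
  "theta lam mu n = lim (\<lambda>N. lam / (lam + mu) * hit0_fin lam mu n N (up_st n n)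
                            + mu / (lam + mu) * hit0_fin lam mu n N (down_st n n))"

text \<open>T_n: expected number of steps until y_1, y_2, ... reaches 0 or n (y_1 is step 1).\<close>
definition Tsteps :: "real \<Rightarrow> real \<Rightarrow> nat \<Rightarrow> real" where
  "Tsteps lam mu n = lim (\<lambda>N. 1 + lam / (lam + mu) * steps_fin lam mu n N (up_st n n)
                               + mu / (lam + mu) * steps_fin lam mu n N (down_st n n))"

definition D :: "real \<Rightarrow> real \<Rightarrow> real \<Rightarrow> real \<Rightarrow> nat \<Rightarrow> real" where
  "D lam mu c r n = r * theta lam mu n - c / (lam + mu) * Tsteps lam mu n"

definition opt_threshold :: "real \<Rightarrow> real \<Rightarrow> real \<Rightarrow> real \<Rightarrow> nat \<Rightarrow> bool" where
  "opt_threshold lam mu c r n \<longleftrightarrow> D lam mu c r n \<ge> 0 \<and> D lam mu c r (Suc n) \<le> 0"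

text \<open>Time is observed at the event epochs (arrivals at rate lam, service completions at rate mu;
 the server is busy since the tagged customer is present).  A history record (k, b, e) says:
 after reneging of other customers the tagged customer was at position k, the regime's placement
 choice was b (True = the arriving customer is placed ahead of the tagged one), and the event
 was an arrival (e = True) or a service completion (e = False).

 A behaviour of the regime and of the other customers is a history-dependent randomised choice
 (pmf) of the tagged customer's position after others' reneging (any k with 1 \<le> k \<le> current
 position; illegal values are read as "nobody reneges") together with the placement of a
 possible arrival.  A strategy of the tagged customer says, after each history, whether to
 renege (True) or stay (False).\<close>

type_synonym hrec = "nat \<times> bool \<times> bool"

type_synonym adversary = "hrec list \<Rightarrow> (nat \<times> bool) pmf"

type_synonym tstrategy = "hrec list \<Rightarrow> bool"

definition legal_pos :: "nat \<Rightarrow> nat \<Rightarrow> nat" where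
  "legal_pos pos k = (if 1 \<le> k \<and> k \<le> pos then k else pos)"

text \<open>Expected payoff (reward r at service completion minus cost c per unit time, 0 after
 reneging) of the tagged customer currently at position pos, truncated after N events (the
 customer is treated as leaving with continuation payoff 0 after N events).  Each inter-event
 time has mean 1/(lam+mu).\<close>
primrec payoff_fin ::
  "real \<Rightarrow> real \<Rightarrow> real \<Rightarrow> real \<Rightarrow> nat \<Rightarrow> tstrategy \<Rightarrow> adversary \<Rightarrow> hrec list \<Rightarrow> nat \<Rightarrow> real" where
  "payoff_fin lam mu c r 0 \<sigma> A h pos = 0"
| "payoff_fin lam mu c r (Suc N) \<sigma> A h pos =
     (if \<sigma> h then 0 else
      measure_pmf.expectation (A h) (\<lambda>(k, b).
        - c / (lam + mu)
        + lam / (lam + mu) *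
            payoff_fin lam mu c r N \<sigma> A (h @ [(legal_pos pos k, b, True)])
              (if b then legal_pos pos k + 1 else legal_pos pos k)
        + mu / (lam + mu) *
            (if legal_pos pos k = 1 then r
             else payoff_fin lam mu c r N \<sigma> A (h @ [(legal_pos pos k, b, False)])
                    (legal_pos pos k - 1))))"

definition has_payoff ::
  "real \<Rightarrow> real \<Rightarrow> real \<Rightarrow> real \<Rightarrow> tstrategy \<Rightarrow> adversary \<Rightarrow> nat \<Rightarrow> real \<Rightarrow> bool" where
  "has_payoff lam mu c r \<sigma> A pos L \<longleftrightarrow> (\<lambda>N. payoff_fin lam mu c r N \<sigma> A [] pos) \<longlonglongrightarrow> L"

end

theory Submission
  imports Defs
begin

text \<open>
  The customer at position k \<le> n* reneges as soon as her position exceeds n*.  Let V j be her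
  payoff from position j when every arrival is placed ahead of her and nobody ahead of her reneges:
  then her position moves up with probability p and down with probability q at each event, as the
  chain y does, so V 0 = r, V (n* + 1) = 0 and
  V j = - c / (\<lambda> + \<mu>) + p V (j + 1) + q V (j - 1) for 1 \<le> j \<le> n*, and solving this recursion
  through the hitting probability and the expected hitting time of the chain shows that V n* has the
  sign of D n*.  Hence V decreases from V 0 = r to V n* \<ge> 0.  Since V is decreasing, any other
  behaviour of the regime and of the other customers only moves her to better positions, and an
  induction over the number of events bounds her truncated payoff below by V k minus r times the
  probability of still being present.  That probability decays geometrically, because within any
  n* events she is served or reneges with probability at least q ^ n*; so the payoffs converge and
  their limit is at least V k \<ge> V n* \<ge> 0, with strict inequality when D n* > 0.
\<close>

lemma power_div_le_powr_power:
  fixes \<beta> :: real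
  assumes "0 < \<beta>" "\<beta> < 1" "1 \<le> n"
  shows "\<beta> ^ (i div n) \<le> (\<beta> powr (1 / n)) ^ i / \<beta>"
proof -
  have "real i < (real (i div n) + 1) * real n"
    using assms(3) by (metis div_less_iff_less_mult less_add_one less_le_trans zero_less_one
        of_nat_add of_nat_less_iff of_nat_mult of_nat_1)
  then have "real i / n \<le> real (i div n) + 1"
    using assms(3) by (simp add: divide_le_eq)
  then have "\<beta> powr (real (i div n) + 1) \<le> \<beta> powr (real i / n)"
    using assms by (intro powr_mono') auto
  then have "\<beta> ^ (i div n) * \<beta> \<le> (\<beta> powr (1 / n)) ^ i"
    using assms by (simp add: powr_add powr_realpow powr_power)
  then show ?thesis using assms by (simp add: le_divide_eq)
qed

lemma incseq_LIMSEQ_lim: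
  fixes X :: "nat \<Rightarrow> real"
  assumes "incseq X" "\<And>N. X N \<le> B"
  shows "X \<longlonglongrightarrow> lim X"
  using incseq_convergent[OF assms(1)] assms(2) by (metis convergentI convergent_LIMSEQ_iff)

type_synonym value_fun = "hrec list \<Rightarrow> nat \<Rightarrow> real"

definition event_value ::
  "real \<Rightarrow> real \<Rightarrow> real \<Rightarrow> real \<Rightarrow> value_fun \<Rightarrow> hrec list \<Rightarrow> nat \<Rightarrow> nat \<times> bool \<Rightarrow> real" where
  "event_value p q a R F h pos = (\<lambda>(k, b). let l = legal_pos pos k in
     a + p * F (h @ [(l, b, True)]) (if b then l + 1 else l)
       + q * (if l = 1 then R else F (h @ [(l, b, False)]) (l - 1)))"

definition step_value ::
  "tstrategy \<Rightarrow> adversary \<Rightarrow> real \<Rightarrow> real \<Rightarrow> real \<Rightarrow> real \<Rightarrow> value_fun \<Rightarrow> value_fun" where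
  "step_value \<sigma> A p q a R F h pos =
     (if \<sigma> h then 0 else measure_pmf.expectation (A h) (event_value p q a R F h pos))"

definition bounded_value :: "value_fun \<Rightarrow> bool" where
  "bounded_value F \<longleftrightarrow> (\<exists>B. \<forall>h pos. \<bar>F h pos\<bar> \<le> B)"

lemma payoff_fin_Suc_step_value:
  "payoff_fin lam mu c r (Suc N) \<sigma> A h pos =
     step_value \<sigma> A (lam / (lam + mu)) (mu / (lam + mu)) (- c / (lam + mu)) r
       (payoff_fin lam mu c r N \<sigma> A) h pos"
  by (simp add: step_value_def event_value_def case_prod_beta Let_def)

lemma bounded_value_diff:
  "bounded_value F \<Longrightarrow> bounded_value G \<Longrightarrow> bounded_value (\<lambda>h pos. F h pos - G h pos)"
  unfolding bounded_value_def by (metis abs_triangle_ineq4 add_mono order_trans)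

lemma bounded_value_cmult: "bounded_value F \<Longrightarrow> bounded_value (\<lambda>h pos. M * F h pos)"
  unfolding bounded_value_def by (metis abs_mult abs_ge_zero mult_left_mono)

lemma event_value_bounded:
  assumes "bounded_value F"
  obtains B where "\<And>h pos x. \<bar>event_value p q a R F h pos x\<bar> \<le> B"
proof -
  obtain B where B: "\<And>h pos. \<bar>F h pos\<bar> \<le> B" using assms unfolding bounded_value_def by blast
  have B0: "0 \<le> B" using B abs_ge_zero order_trans by blast
  have "\<bar>event_value p q a R F h pos x\<bar> \<le> \<bar>a\<bar> + \<bar>p\<bar> * B + \<bar>q\<bar> * (\<bar>R\<bar> + B)" for h pos x
  proof -
    obtain k b where x: "x = (k, b)" by fastforce
    define l where "l = legal_pos pos k"
    define X where "X = F (h @ [(l, b, True)]) (if b then l + 1 else l)"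
    define Y where "Y = (if l = 1 then R else F (h @ [(l, b, False)]) (l - 1))"
    have "\<bar>X\<bar> \<le> B" by (simp add: X_def B)
    moreover have "\<bar>Y\<bar> \<le> \<bar>R\<bar> + B"
      using B[of "h @ [(l, b, False)]" "l - 1"] B0 by (auto simp: Y_def)
    ultimately have "\<bar>p\<bar> * \<bar>X\<bar> \<le> \<bar>p\<bar> * B" "\<bar>q\<bar> * \<bar>Y\<bar> \<le> \<bar>q\<bar> * (\<bar>R\<bar> + B)"
      by (simp_all add: mult_left_mono)
    moreover have "\<bar>a + p * X + q * Y\<bar> \<le> \<bar>a\<bar> + \<bar>p\<bar> * \<bar>X\<bar> + \<bar>q\<bar> * \<bar>Y\<bar>"
      using abs_triangle_ineq[of "a + p * X" "q * Y"] abs_triangle_ineq[of a "p * X"]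
      by (simp add: abs_mult)
    moreover have "event_value p q a R F h pos x = a + p * X + q * Y"
      by (simp add: event_value_def x l_def X_def Y_def Let_def)
    ultimately show ?thesis by linarith
  qed
  then show thesis by (rule that)
qed

lemma integrable_event_value:
  assumes "bounded_value F"
  shows "integrable (measure_pmf M) (event_value p q a R F h pos)"
proof -
  obtain B where "\<And>h pos x. \<bar>event_value p q a R F h pos x\<bar> \<le> B"
    using event_value_bounded[OF assms, where p=p and q=q and a=a and R=R] by blast
  then show ?thesis by (intro measure_pmf.integrable_const_bound[where B=B] AE_I2) simp_all
qed

lemma bounded_value_step_value:
  assumes "bounded_value F"
  shows "bounded_value (step_value \<sigma> A p q a R F)"
proof -
  obtain B where B: "\<And>h pos x. \<bar>event_value p q a R F h pos x\<bar> \<le> B"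
    using event_value_bounded[OF assms, where p=p and q=q and a=a and R=R] by blast
  have "\<bar>measure_pmf.expectation (A h) (event_value p q a R F h pos)\<bar> \<le> B" for h pos
  proof -
    have "- B \<le> measure_pmf.expectation (A h) (event_value p q a R F h pos)"
      by (rule measure_pmf.integral_ge_const[OF integrable_event_value[OF assms]])
         (intro AE_I2, metis B abs_le_D2 minus_le_iff)
    moreover have "measure_pmf.expectation (A h) (event_value p q a R F h pos) \<le> B"
      by (rule measure_pmf.integral_le_const[OF integrable_event_value[OF assms]])
         (intro AE_I2, metis B abs_le_D1)
    ultimately show ?thesis by linarith
  qed
  moreover have "0 \<le> B" using B abs_ge_zero order_trans by blast
  ultimately show ?thesis
    unfolding bounded_value_def step_value_def by (metis abs_zero)
qed

lemma step_value_diff: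
  assumes "bounded_value F" "bounded_value G"
  shows "step_value \<sigma> A p q a R F h pos - step_value \<sigma> A p q a' R' G h pos =
         step_value \<sigma> A p q (a - a') (R - R') (\<lambda>h pos. F h pos - G h pos) h pos"
proof -
  have "event_value p q (a - a') (R - R') (\<lambda>h pos. F h pos - G h pos) h pos =
        (\<lambda>x. event_value p q a R F h pos x - event_value p q a' R' G h pos x)"
    by (auto simp: event_value_def Let_def algebra_simps)
  then show ?thesis
    using Bochner_Integration.integral_diff[OF integrable_event_value[OF assms(1)] integrable_event_value[OF assms(2)]]
    by (simp add: step_value_def)
qed

lemma step_value_cmult:
  "step_value \<sigma> A p q (M * a) (M * R) (\<lambda>h pos. M * F h pos) h pos = M * step_value \<sigma> A p q a R F h pos"
proof -
  have "event_value p q (M * a) (M * R) (\<lambda>h pos. M * F h pos) h pos =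
        (\<lambda>x. M * event_value p q a R F h pos x)"
    by (auto simp: event_value_def Let_def algebra_simps)
  then show ?thesis by (simp add: step_value_def)
qed

lemma const_le_step_value:
  assumes "\<not> \<sigma> h" "bounded_value F" "\<And>x. K \<le> event_value p q a R F h pos x"
  shows "K \<le> step_value \<sigma> A p q a R F h pos"
  using measure_pmf.integral_ge_const[OF integrable_event_value[OF assms(2)]] assms(1,3)
  by (simp add: step_value_def)

lemma step_value_le_const:
  assumes "0 \<le> K" "bounded_value F" "\<And>x. event_value p q a R F h pos x \<le> K"
  shows "step_value \<sigma> A p q a R F h pos \<le> K"
  using measure_pmf.integral_le_const[OF integrable_event_value[OF assms(2)]] assms(1,3)
  by (simp add: step_value_def)

definition current_pos :: "nat \<Rightarrow> hrec list \<Rightarrow> nat" where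
  "current_pos start h = (if h = [] then start else
     (case last h of (l, b, e) \<Rightarrow> if e then (if b then l + 1 else l) else l - 1))"

lemma current_pos_Nil [simp]: "current_pos start [] = start"
  by (simp add: current_pos_def)

lemma current_pos_arrival [simp]: "current_pos start (h @ [(l, b, True)]) = (if b then l + 1 else l)"
  by (simp add: current_pos_def)

lemma current_pos_service [simp]: "current_pos start (h @ [(l, b, False)]) = l - 1"
  by (simp add: current_pos_def)

text \<open>F \<le> G is only required at states whose position is the one recorded by the history; the
  states reached from (h, pos) by one event are of this kind.\<close>

lemma step_value_mono:
  assumes "0 \<le> p" "0 \<le> q" "a \<le> a'" "R \<le> R'" "1 \<le> pos"
    and "bounded_value F" "bounded_value G"
    and FG: "\<And>h' pos'. 1 \<le> pos' \<Longrightarrow> pos' = current_pos start h' \<Longrightarrow> F h' pos' \<le> G h' pos'"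
  shows "step_value \<sigma> A p q a R F h pos \<le> step_value \<sigma> A p q a' R' G h pos"
proof -
  have "event_value p q a R F h pos x \<le> event_value p q a' R' G h pos x" for x
  proof -
    obtain k b where x: "x = (k, b)" by fastforce
    define l where "l = legal_pos pos k"
    define s where "s = (if b then l + 1 else l)"
    have l1: "1 \<le> l" using \<open>1 \<le> pos\<close> by (simp add: l_def legal_pos_def)
    have "F (h @ [(l, b, True)]) s \<le> G (h @ [(l, b, True)]) s"
      using FG[of s "h @ [(l, b, True)]"] l1 by (simp add: s_def)
    moreover have "(if l = 1 then R else F (h @ [(l, b, False)]) (l - 1))
        \<le> (if l = 1 then R' else G (h @ [(l, b, False)]) (l - 1))"
      using FG[of "l - 1" "h @ [(l, b, False)]"] l1 \<open>R \<le> R'\<close> by auto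
    ultimately have "a + p * F (h @ [(l, b, True)]) s + q * (if l = 1 then R else F (h @ [(l, b, False)]) (l - 1))
        \<le> a' + p * G (h @ [(l, b, True)]) s + q * (if l = 1 then R' else G (h @ [(l, b, False)]) (l - 1))"
      using assms(1-3) by (intro add_mono mult_left_mono)
    then show ?thesis
      unfolding event_value_def x prod.case Let_def l_def[symmetric] s_def[symmetric] .
  qed
  then show ?thesis
    unfolding step_value_def
    using integral_mono[OF integrable_event_value[OF assms(6)] integrable_event_value[OF assms(7)]]
    by simp
qed

lemma abs_step_value_le_const:
  assumes "bounded_value F" "\<And>x. \<bar>event_value p q a R F h pos x\<bar> \<le> K"
  shows "\<bar>step_value \<sigma> A p q a R F h pos\<bar> \<le> K"
proof (cases "\<sigma> h")
  case True
  then show ?thesis using assms(2) by (simp add: step_value_def) (meson abs_ge_zero order_trans)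
next
  case False
  have "- K \<le> step_value \<sigma> A p q a R F h pos"
    using assms by (intro const_le_step_value[where \<sigma>=\<sigma> and h=h, OF False])
      (simp_all add: abs_le_iff minus_le_iff)
  moreover have "step_value \<sigma> A p q a R F h pos \<le> K"
    using assms by (intro step_value_le_const) (auto dest: abs_le_D1 intro: order_trans[OF abs_ge_zero])
  ultimately show ?thesis by (simp add: abs_le_iff)
qed

lemma abs_step_value_le:
  assumes "0 \<le> p" "0 \<le> q" "1 \<le> pos" "bounded_value F" "bounded_value G"
    and FG: "\<And>h' pos'. 1 \<le> pos' \<Longrightarrow> pos' = current_pos start h' \<Longrightarrow> \<bar>F h' pos'\<bar> \<le> G h' pos'"
  shows "\<bar>step_value \<sigma> A p q 0 0 F h pos\<bar> \<le> step_value \<sigma> A p q 0 0 G h pos"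
proof -
  have "step_value \<sigma> A p q 0 0 F h pos \<le> step_value \<sigma> A p q 0 0 G h pos"
    using assms by (intro step_value_mono[where start=start]) (auto dest: FG abs_le_D1)
  moreover have "step_value \<sigma> A p q 0 0 (\<lambda>h pos. - 1 * F h pos) h pos \<le> step_value \<sigma> A p q 0 0 G h pos"
    using assms by (intro step_value_mono[where start=start] bounded_value_cmult) (auto dest: FG abs_le_D2)
  then have "- step_value \<sigma> A p q 0 0 F h pos \<le> step_value \<sigma> A p q 0 0 G h pos"
    using step_value_cmult[of \<sigma> A p q "- 1" 0 0 F] by simp
  ultimately show ?thesis by (simp add: abs_le_iff)
qed

text \<open>The probability that after N events the customer is still present, neither served nor
  reneging.\<close>

primrec survival :: "tstrategy \<Rightarrow> adversary \<Rightarrow> real \<Rightarrow> real \<Rightarrow> nat \<Rightarrow> value_fun" where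
  "survival \<sigma> A p q 0 h pos = (if \<sigma> h then 0 else 1)"
| "survival \<sigma> A p q (Suc N) h pos = step_value \<sigma> A p q 0 0 (survival \<sigma> A p q N) h pos"

lemma bounded_value_survival: "bounded_value (survival \<sigma> A p q N)"
proof (induction N)
  case 0
  then show ?case unfolding bounded_value_def by (intro exI[of _ 1]) simp
qed (simp add: bounded_value_step_value)

lemma survival_reneged: "\<sigma> h \<Longrightarrow> survival \<sigma> A p q N h pos = 0"
  by (cases N) (simp_all add: step_value_def)

lemma survival_bounds:
  assumes "0 \<le> p" "0 \<le> q" "p + q = 1"
  shows "0 \<le> survival \<sigma> A p q N h pos \<and> survival \<sigma> A p q N h pos \<le> 1"
proof (induction N arbitrary: h pos)
  case (Suc N)
  have "0 \<le> event_value p q 0 0 (survival \<sigma> A p q N) h pos x" for x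
    using Suc assms by (auto simp: event_value_def Let_def case_prod_beta)
  moreover have "event_value p q 0 0 (survival \<sigma> A p q N) h pos x \<le> 1" for x
  proof -
    have "event_value p q 0 0 (survival \<sigma> A p q N) h pos x \<le> 0 + p * 1 + q * 1"
      using Suc assms unfolding event_value_def Let_def case_prod_beta
      by (intro add_mono mult_left_mono) auto
    then show ?thesis using assms by simp
  qed
  ultimately show ?case
    using const_le_step_value[OF _ bounded_value_survival] step_value_le_const[OF _ bounded_value_survival]
    by (simp add: step_value_def)
qed simp

text \<open>Within pos events the customer is served with probability at least q ^ pos, whatever the
  regime and the others do: pos consecutive service completions suffice.\<close>

lemma survival_le_one_minus_power:
  assumes "0 \<le> p" "0 \<le> q" "p + q = 1"
  shows "1 \<le> pos \<Longrightarrow> pos \<le> N \<Longrightarrow> survival \<sigma> A p q N h pos \<le> 1 - q ^ pos"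
proof (induction N arbitrary: h pos)
  case (Suc N)
  have q1: "q \<le> 1" using assms by simp
  have "event_value p q 0 0 (survival \<sigma> A p q N) h pos x \<le> 1 - q ^ pos" for x
  proof -
    obtain k b where x: "x = (k, b)" by fastforce
    define l where "l = legal_pos pos k"
    have l: "1 \<le> l" "l \<le> pos" using Suc.prems by (auto simp: l_def legal_pos_def)
    have "survival \<sigma> A p q N (h @ [(l, b, True)]) (if b then l + 1 else l) \<le> 1"
      using survival_bounds[OF assms] by blast
    moreover have "(if l = 1 then 0 else survival \<sigma> A p q N (h @ [(l, b, False)]) (l - 1))
        \<le> 1 - q ^ (pos - 1)"
    proof (cases "l = 1")
      case True then show ?thesis using assms q1 by (simp add: power_le_one)
    next
      case False
      then have "survival \<sigma> A p q N (h @ [(l, b, False)]) (l - 1) \<le> 1 - q ^ (l - 1)"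
        using Suc l by auto
      moreover have "q ^ (pos - 1) \<le> q ^ (l - 1)"
        using assms q1 l by (intro power_decreasing) auto
      ultimately show ?thesis using False by simp
    qed
    ultimately have "event_value p q 0 0 (survival \<sigma> A p q N) h pos x \<le> 0 + p * 1 + q * (1 - q ^ (pos - 1))"
      unfolding event_value_def x prod.case Let_def l_def[symmetric]
      using assms by (intro add_mono mult_left_mono) auto
    also have "\<dots> = 1 - q ^ pos"
      using \<open>1 \<le> pos\<close> assms(3) by (cases pos) (auto simp: algebra_simps)
    finally show ?thesis .
  qed
  moreover have "0 \<le> 1 - q ^ pos" using assms q1 by (simp add: power_le_one)
  ultimately show ?case
    by (simp add: step_value_le_const bounded_value_survival)
qed simp

definition threshold_strategy :: "nat \<Rightarrow> nat \<Rightarrow> tstrategy" where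
  "threshold_strategy n start h \<longleftrightarrow> n < current_pos start h"

locale tagged_customer =
  fixes lam mu c r :: real
  assumes lam_pos: "0 < lam" and mu_pos: "0 < mu" and c_pos: "0 < c" and r_pos: "0 < r"
begin

definition p :: real where "p = lam / (lam + mu)"
definition q :: real where "q = mu / (lam + mu)"
definition cost :: real where "cost = c / (lam + mu)"

lemma p_pos: "0 < p" using lam_pos mu_pos by (simp add: p_def)
lemma q_pos: "0 < q" using lam_pos mu_pos by (simp add: q_def)
lemma p_plus_q: "p + q = 1" using lam_pos mu_pos by (simp add: p_def q_def add_divide_distrib[symmetric])
lemma q_eq: "q = 1 - p" using p_plus_q by simp
lemma q_less_1: "q < 1" using p_pos q_eq by simp
lemma cost_pos: "0 < cost" using lam_pos mu_pos c_pos by (simp add: cost_def)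

lemma survival_nonneg: "0 \<le> survival \<sigma> A p q N h pos"
  using survival_bounds p_pos q_pos p_plus_q by simp

lemma survival_le_1: "survival \<sigma> A p q N h pos \<le> 1"
  using survival_bounds p_pos q_pos p_plus_q by simp

abbreviation payoff :: "nat \<Rightarrow> tstrategy \<Rightarrow> adversary \<Rightarrow> value_fun" where
  "payoff N \<equiv> payoff_fin lam mu c r N"

declare payoff_fin.simps(2) [simp del]

lemma payoff_Suc: "payoff (Suc N) \<sigma> A h pos = step_value \<sigma> A p q (- cost) r (payoff N \<sigma> A) h pos"
  by (simp only: payoff_fin_Suc_step_value p_def q_def cost_def minus_divide_left)

lemma bounded_value_payoff: "bounded_value (payoff N \<sigma> A)"
proof (induction N)
  case 0
  then show ?case unfolding bounded_value_def by (intro exI[of _ 0]) simp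
next
  case (Suc N)
  then show ?case unfolding payoff_Suc[abs_def] by (rule bounded_value_step_value)
qed

text \<open>The payoffs truncated after N and N + 1 events differ only when the customer is still
  present after N events.\<close>

lemma payoff_increment_le:
  "1 \<le> pos \<Longrightarrow> pos = current_pos start h \<Longrightarrow>
   \<bar>payoff (Suc N) \<sigma> A h pos - payoff N \<sigma> A h pos\<bar> \<le> (cost + r) * survival \<sigma> A p q N h pos"
proof (induction N arbitrary: h pos)
  case 0
  have "event_value p q (- cost) r (payoff 0 \<sigma> A) h pos x \<in> {- cost, q * r - cost}" for x
    by (auto simp: event_value_def Let_def case_prod_beta)
  moreover have "0 \<le> q * r" "q * r \<le> r"
    using r_pos q_pos q_less_1 by (simp_all add: mult_left_le_one_le)
  ultimately have "\<bar>event_value p q (- cost) r (payoff 0 \<sigma> A) h pos x\<bar> \<le> cost + r" for x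
    using cost_pos by (smt (verit) insert_iff empty_iff)
  then have "\<bar>payoff 1 \<sigma> A h pos\<bar> \<le> cost + r"
    unfolding One_nat_def payoff_Suc by (rule abs_step_value_le_const[OF bounded_value_payoff])
  then show ?case by (cases "\<sigma> h") (simp_all add: payoff_Suc[of 0] step_value_def)
next
  case (Suc N)
  define \<Delta> where "\<Delta> = (\<lambda>h pos. payoff (Suc N) \<sigma> A h pos - payoff N \<sigma> A h pos)"
  define G where "G = (\<lambda>h pos. (cost + r) * survival \<sigma> A p q N h pos)"
  have "payoff (Suc (Suc N)) \<sigma> A h pos - payoff (Suc N) \<sigma> A h pos = step_value \<sigma> A p q 0 0 \<Delta> h pos"
    using payoff_Suc[of "Suc N" \<sigma> A h pos] payoff_Suc[of N \<sigma> A h pos]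
      step_value_diff[OF bounded_value_payoff[of "Suc N" \<sigma> A] bounded_value_payoff[of N \<sigma> A],
        where \<sigma>=\<sigma> and A=A and a="- cost" and R=r and a'="- cost" and R'=r and h=h and pos=pos]
    unfolding \<Delta>_def[symmetric] by simp
  moreover have "\<bar>step_value \<sigma> A p q 0 0 \<Delta> h pos\<bar> \<le> step_value \<sigma> A p q 0 0 G h pos"
  proof (rule abs_step_value_le[where start=start])
    show "bounded_value \<Delta>" "bounded_value G"
      unfolding \<Delta>_def G_def
      by (intro bounded_value_diff bounded_value_cmult bounded_value_payoff bounded_value_survival)+
  qed (use p_pos q_pos Suc in \<open>auto simp: \<Delta>_def G_def\<close>)
  moreover have "step_value \<sigma> A p q 0 0 G h pos = (cost + r) * survival \<sigma> A p q (Suc N) h pos"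
    using step_value_cmult[of \<sigma> A p q "cost + r" 0 0] by (simp add: G_def)
  ultimately show ?case by simp
qed

lemma payoff_convergent:
  assumes "summable (\<lambda>N. survival \<sigma> A p q N h pos)" "1 \<le> pos" "pos = current_pos start h"
  shows "convergent (\<lambda>N. payoff N \<sigma> A h pos)"
proof -
  have "summable (\<lambda>N. payoff (Suc N) \<sigma> A h pos - payoff N \<sigma> A h pos)"
  proof (rule summable_comparison_test')
    show "summable (\<lambda>N. (cost + r) * survival \<sigma> A p q N h pos)"
      using assms(1) by (rule summable_mult)
    show "norm (payoff (Suc N) \<sigma> A h pos - payoff N \<sigma> A h pos) \<le> (cost + r) * survival \<sigma> A p q N h pos"
      for N using payoff_increment_le[OF assms(2,3)] by simp
  qed
  then show ?thesis
    by (simp add: summable_iff_convergent sum_lessThan_telescope[of "\<lambda>N. payoff N \<sigma> A h pos"])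
qed

end

locale threshold_customer = tagged_customer +
  fixes n :: nat
  assumes n_pos: "1 \<le> n"
begin

abbreviation renege :: "nat \<Rightarrow> tstrategy" where
  "renege \<equiv> threshold_strategy n"

lemma survival_threshold_n_le:
  assumes "1 \<le> pos" "pos = current_pos start h"
  shows "survival (renege start) A p q n h pos \<le> 1 - q ^ n"
proof (cases "n < pos")
  case True
  then show ?thesis
    using assms q_pos q_less_1 by (simp add: survival_reneged threshold_strategy_def power_le_one)
next
  case False
  then have "survival (renege start) A p q n h pos \<le> 1 - q ^ pos"
    using survival_le_one_minus_power p_pos q_pos p_plus_q assms by simp
  moreover have "q ^ n \<le> q ^ pos"
    using False assms q_pos q_less_1 by (intro power_decreasing) auto
  ultimately show ?thesis by simp
qed

lemma survival_threshold_add: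
  "1 \<le> pos \<Longrightarrow> pos = current_pos start h \<Longrightarrow>
   survival (renege start) A p q (a + n) h pos \<le> (1 - q ^ n) * survival (renege start) A p q a h pos"
proof (induction a arbitrary: h pos)
  case 0
  then show ?case
    using survival_threshold_n_le[OF 0] by (cases "renege start h") (simp_all add: survival_reneged)
next
  case (Suc a)
  have "survival (renege start) A p q (Suc a + n) h pos =
      step_value (renege start) A p q 0 0 (survival (renege start) A p q (a + n)) h pos"
    by simp
  also have "\<dots> \<le> step_value (renege start) A p q 0 0
      (\<lambda>h pos. (1 - q ^ n) * survival (renege start) A p q a h pos) h pos"
    by (rule step_value_mono[where start=start])
      (use p_pos q_pos Suc in \<open>auto intro: bounded_value_survival bounded_value_cmult\<close>)
  also have "\<dots> = (1 - q ^ n) * survival (renege start) A p q (Suc a) h pos"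
    using step_value_cmult[of "renege start" A p q "1 - q ^ n" 0 0] by simp
  finally show ?case .
qed

lemma survival_threshold_le_power:
  assumes "1 \<le> pos" "pos = current_pos start h"
  shows "survival (renege start) A p q N h pos \<le> (1 - q ^ n) ^ (N div n)"
proof -
  have "survival (renege start) A p q (N mod n + j * n) h pos \<le> (1 - q ^ n) ^ j" for j
  proof (induction j)
    case 0
    then show ?case using survival_le_1 by simp
  next
    case (Suc j)
    have "survival (renege start) A p q (N mod n + Suc j * n) h pos
        \<le> (1 - q ^ n) * survival (renege start) A p q (N mod n + j * n) h pos"
      using survival_threshold_add[OF assms, where a="N mod n + j * n"] by (simp add: algebra_simps)
    also have "\<dots> \<le> (1 - q ^ n) * (1 - q ^ n) ^ j"
      using Suc q_pos q_less_1 by (intro mult_left_mono) (auto simp: power_le_one)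
    finally show ?case by simp
  qed
  from this[of "N div n"] show ?thesis by simp
qed

lemma summable_survival_threshold:
  assumes "1 \<le> start"
  shows "summable (\<lambda>N. survival (renege start) A p q N [] start)"
proof -
  define \<beta> where "\<beta> = 1 - q ^ n"
  have \<beta>: "0 < \<beta>" "\<beta> < 1"
    using q_pos q_less_1 n_pos by (simp_all add: \<beta>_def power_less_one_iff)
  have "\<beta> powr (1 / n) < 1"
    using powr_less_mono2[of "1 / n" \<beta> 1] \<beta> n_pos by simp
  then have "summable (\<lambda>N. (\<beta> powr (1 / n)) ^ N / \<beta>)"
    by (intro summable_divide summable_geometric) simp
  moreover have "norm (survival (renege start) A p q N [] start) \<le> (\<beta> powr (1 / n)) ^ N / \<beta>" for N
    using survival_nonneg survival_threshold_le_power[where start=start and h="[]" and N=N and A=A] assms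
      power_div_le_powr_power[OF \<beta> n_pos, of N]
    by (simp add: \<beta>_def)
  ultimately show ?thesis by (blast intro: summable_comparison_test')
qed

definition threshold_subsolution :: "(nat \<Rightarrow> real) \<Rightarrow> bool" where
  "threshold_subsolution V \<longleftrightarrow> antimono V \<and> V 0 \<le> r \<and> (\<forall>j>n. V j = 0) \<and>
     (\<forall>j. 1 \<le> j \<and> j \<le> n \<longrightarrow> V j \<le> - cost + p * V (Suc j) + q * V (j - 1))"

lemma subsolution_le_r: "threshold_subsolution V \<Longrightarrow> V j \<le> r"
  using antimonoD[of V 0 j] by (simp add: threshold_subsolution_def)

lemma subsolution_nonneg: "threshold_subsolution V \<Longrightarrow> 0 \<le> V j"
  using antimonoD[of V j "Suc (max j n)"] by (simp add: threshold_subsolution_def)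

lemma bounded_value_subsolution: "threshold_subsolution V \<Longrightarrow> bounded_value (\<lambda>h pos. V pos)"
  unfolding bounded_value_def using subsolution_le_r subsolution_nonneg by (intro exI[of _ r]) auto

lemma subsolution_le_step_value:
  assumes V: "threshold_subsolution V" and "1 \<le> pos" "pos \<le> n" "\<not> \<sigma> h"
  shows "V pos \<le> step_value \<sigma> A p q (- cost) r (\<lambda>h pos. V pos) h pos"
proof (rule const_le_step_value[where \<sigma>=\<sigma> and h=h, OF \<open>\<not> \<sigma> h\<close> bounded_value_subsolution[OF V]])
  fix x :: "nat \<times> bool"
  obtain k b where x: "x = (k, b)" by fastforce
  define l where "l = legal_pos pos k"
  have l: "1 \<le> l" "l \<le> pos" using \<open>1 \<le> pos\<close> by (auto simp: l_def legal_pos_def)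
  \<comment> \<open>V is antitone, so the worst event for the customer is an arrival placed ahead of her while
    nobody ahead of her reneges.\<close>
  have "V (Suc pos) \<le> V (if b then l + 1 else l)" "V (pos - 1) \<le> (if l = 1 then r else V (l - 1))"
    using l V subsolution_le_r[OF V] by (auto simp: threshold_subsolution_def antimonoD)
  then have "p * V (Suc pos) \<le> p * V (if b then l + 1 else l)"
    "q * V (pos - 1) \<le> q * (if l = 1 then r else V (l - 1))"
    using p_pos q_pos by (simp_all add: mult_left_mono)
  moreover have "V pos \<le> - cost + p * V (Suc pos) + q * V (pos - 1)"
    using V assms(2,3) by (simp add: threshold_subsolution_def)
  ultimately show "V pos \<le> event_value p q (- cost) r (\<lambda>h pos. V pos) h pos x"
    unfolding event_value_def x prod.case Let_def l_def[symmetric] by linarith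
qed

lemma payoff_threshold_ge:
  assumes V: "threshold_subsolution V"
  shows "1 \<le> pos \<Longrightarrow> pos = current_pos start h \<Longrightarrow>
    V pos - r * survival (renege start) A p q N h pos \<le> payoff N (renege start) A h pos"
proof (induction N arbitrary: h pos)
  case 0
  then show ?case
    using V subsolution_le_r[OF V] by (auto simp: threshold_subsolution_def threshold_strategy_def)
next
  case (Suc N)
  show ?case
  proof (cases "renege start h")
    case True
    then show ?thesis
      using V Suc.prems(2)
      by (simp add: threshold_subsolution_def threshold_strategy_def survival_reneged payoff_Suc step_value_def)
  next
    case False
    then have "pos \<le> n" using Suc.prems(2) by (simp add: threshold_strategy_def)
    define W where "W = (\<lambda>h pos. V pos - r * survival (renege start) A p q N h pos)"
    have "V pos \<le> step_value (renege start) A p q (- cost) r (\<lambda>h pos. V pos) h pos"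
      by (rule subsolution_le_step_value[OF V Suc.prems(1) \<open>pos \<le> n\<close>]) (rule False)
    also have "\<dots> = step_value (renege start) A p q (- cost) r W h pos
        + r * survival (renege start) A p q (Suc N) h pos"
      using step_value_diff[OF bounded_value_subsolution[OF V]
          bounded_value_cmult[OF bounded_value_survival, of r "renege start" A p q N],
          where \<sigma>="renege start" and A=A and p=p and q=q and a="- cost" and R=r and a'=0 and R'=0
          and h=h and pos=pos]
        step_value_cmult[of "renege start" A p q r 0 0 "survival (renege start) A p q N" h pos]
      by (simp add: W_def)
    also have "step_value (renege start) A p q (- cost) r W h pos \<le> payoff (Suc N) (renege start) A h pos"
      unfolding payoff_Suc
    proof (rule step_value_mono[where start=start])
      show "bounded_value W"
        unfolding W_def
        by (intro bounded_value_diff bounded_value_cmult bounded_value_subsolution[OF V] bounded_value_survival)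
    qed (use p_pos q_pos Suc in \<open>auto simp: W_def intro: bounded_value_payoff\<close>)
    finally show ?thesis by simp
  qed
qed

lemma has_payoff_threshold_ge:
  assumes "threshold_subsolution V" "1 \<le> start"
  shows "\<exists>L. has_payoff lam mu c r (renege start) A start L \<and> V start \<le> L"
proof -
  have summable: "summable (\<lambda>N. survival (renege start) A p q N [] start)"
    using assms(2) by (rule summable_survival_threshold)
  then have "convergent (\<lambda>N. payoff N (renege start) A [] start)"
    using assms(2) by (intro payoff_convergent[where start=start]) simp_all
  then obtain L where L: "(\<lambda>N. payoff N (renege start) A [] start) \<longlonglongrightarrow> L"
    by (auto simp: convergent_def)
  have "(\<lambda>N. V start - r * survival (renege start) A p q N [] start) \<longlonglongrightarrow> V start - r * 0"
    by (intro tendsto_intros summable_LIMSEQ_zero[OF summable])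
  then have "V start \<le> L"
    using payoff_threshold_ge[OF assms(1), where h="[]" and start=start] assms(2)
    by (intro LIMSEQ_le[OF _ L]) auto
  with L show ?thesis by (auto simp: has_payoff_def)
qed

declare hit0_fin.simps(2) [simp del] steps_fin.simps(2) [simp del]

abbreviation hit0 :: "nat \<Rightarrow> nat \<Rightarrow> real" where
  "hit0 N \<equiv> hit0_fin lam mu n N"

abbreviation steps :: "nat \<Rightarrow> nat \<Rightarrow> real" where
  "steps N \<equiv> steps_fin lam mu n N"

lemma up_st_less: "i < n \<Longrightarrow> up_st n i = Suc i"
  by (simp add: up_st_def)

lemma down_st_eq: "down_st n i = i - 1"
  by (simp add: down_st_def)

lemma hit0_Suc:
  "hit0 (Suc N) i = (if i = 0 then 1 else if i = n then 0
     else p * hit0 N (up_st n i) + q * hit0 N (down_st n i))"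
  by (simp add: hit0_fin.simps(2) p_def q_def)

lemma steps_Suc:
  "steps (Suc N) i = (if i = 0 \<or> i = n then 0
     else 1 + p * steps N (up_st n i) + q * steps N (down_st n i))"
  by (simp add: steps_fin.simps(2) p_def q_def)

lemma hit0_bounds: "0 \<le> hit0 N i \<and> hit0 N i \<le> 1"
proof (induction N arbitrary: i)
  case (Suc N)
  have "p * hit0 N (up_st n i) + q * hit0 N (down_st n i) \<le> p * 1 + q * 1"
    using Suc p_pos q_pos by (intro add_mono mult_left_mono) auto
  then show ?case using Suc p_pos q_pos p_plus_q by (simp add: hit0_Suc)
qed simp

lemma incseq_hit0: "incseq (\<lambda>N. hit0 N i)"
proof -
  have "hit0 N i \<le> hit0 (Suc N) i" for N
  proof (induction N arbitrary: i)
    case 0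
    then show ?case using hit0_bounds p_pos q_pos by (simp add: hit0_Suc)
  next
    case (Suc N)
    have "p * hit0 N (up_st n i) + q * hit0 N (down_st n i)
        \<le> p * hit0 (Suc N) (up_st n i) + q * hit0 (Suc N) (down_st n i)"
      using Suc p_pos q_pos by (intro add_mono mult_left_mono) auto
    then show ?case by (simp add: hit0_Suc[of "Suc N"] hit0_Suc[of N])
  qed
  then show ?thesis by (rule incseq_SucI)
qed

definition hit0_prob :: "nat \<Rightarrow> real" where
  "hit0_prob i = lim (\<lambda>N. hit0 N i)"

lemma hit0_LIMSEQ: "(\<lambda>N. hit0 N i) \<longlonglongrightarrow> hit0_prob i"
  unfolding hit0_prob_def using incseq_hit0 hit0_bounds by (blast intro: incseq_LIMSEQ_lim)

lemma hit0_prob_bounds: "0 \<le> hit0_prob i" "hit0_prob i \<le> 1"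
  using LIMSEQ_le_const[OF hit0_LIMSEQ] LIMSEQ_le_const2[OF hit0_LIMSEQ] hit0_bounds by blast+

lemma hit0_prob_0: "hit0_prob 0 = 1"
proof -
  have "(\<lambda>N. hit0 N 0) = (\<lambda>N. 1)"
    by (rule ext, case_tac N) (simp_all add: hit0_Suc)
  then show ?thesis by (simp add: hit0_prob_def)
qed

lemma hit0_prob_n: "hit0_prob n = 0"
proof -
  have "(\<lambda>N. hit0 N n) = (\<lambda>N. 0)"
    using n_pos by (intro ext, case_tac N) (simp_all add: hit0_Suc)
  then show ?thesis by (simp add: hit0_prob_def)
qed

lemma hit0_prob_rec:
  assumes "0 < i" "i < n"
  shows "hit0_prob i = p * hit0_prob (Suc i) + q * hit0_prob (i - 1)"
proof (rule LIMSEQ_unique)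
  show "(\<lambda>N. hit0 (Suc N) i) \<longlonglongrightarrow> hit0_prob i"
    using hit0_LIMSEQ by (rule LIMSEQ_Suc)
  show "(\<lambda>N. hit0 (Suc N) i) \<longlonglongrightarrow> p * hit0_prob (Suc i) + q * hit0_prob (i - 1)"
    using assms by (simp add: hit0_Suc up_st_less down_st_eq) (intro tendsto_intros hit0_LIMSEQ)
qed

lemma steps_nonneg: "0 \<le> steps N i"
  by (induction N arbitrary: i) (simp_all add: steps_Suc p_pos q_pos less_imp_le)

lemma incseq_steps: "incseq (\<lambda>N. steps N i)"
proof -
  have "steps N i \<le> steps (Suc N) i" for N
  proof (induction N arbitrary: i)
    case 0
    then show ?case using steps_nonneg by (simp add: steps_Suc)
  next
    case (Suc N)
    have "p * steps N (up_st n i) + q * steps N (down_st n i)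
        \<le> p * steps (Suc N) (up_st n i) + q * steps (Suc N) (down_st n i)"
      using Suc p_pos q_pos by (intro add_mono mult_left_mono) auto
    then show ?case by (simp add: steps_Suc[of "Suc N"] steps_Suc[of N])
  qed
  then show ?thesis by (rule incseq_SucI)
qed

text \<open>With z = 2 / p, the function (z ^ n - z ^ i) is a Lyapunov function for the chain:
  1 + p (z ^ n - z ^ (i + 1)) + q (z ^ n - z ^ (i - 1)) \<le> z ^ n - z ^ i.\<close>

lemma steps_le:
  assumes "i \<le> n"
  shows "steps N i \<le> (2 / p) ^ n - (2 / p) ^ i"
  using assms
proof (induction N arbitrary: i)
  define z where "z = 2 / p"
  have z: "2 \<le> z" using p_pos p_plus_q q_pos by (simp add: z_def field_simps)
  {
    case 0
    then show ?case using z by (simp add: z_def[symmetric] power_increasing)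
  next
    case (Suc N)
    show ?case
    proof (cases "i = 0 \<or> i = n")
      case True
      then show ?thesis using Suc.prems z by (auto simp: steps_Suc z_def[symmetric] power_increasing)
    next
      case False
      then have i: "0 < i" "i < n" using Suc.prems by auto
      have "steps N (Suc i) \<le> z ^ n - z ^ Suc i" "steps N (i - 1) \<le> z ^ n - z ^ (i - 1)"
        using Suc.IH[of "Suc i"] Suc.IH[of "i - 1"] i unfolding z_def[symmetric] by simp_all
      then have "steps (Suc N) i \<le> 1 + p * (z ^ n - z ^ Suc i) + q * (z ^ n - z ^ (i - 1))"
        using False i p_pos q_pos
        by (simp add: steps_Suc up_st_less down_st_eq add_mono mult_left_mono)
      also have "\<dots> = (p + q) * z ^ n + 1 - p * z ^ Suc i - q * z ^ (i - 1)"
        by (simp add: algebra_simps)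
      also have "\<dots> = z ^ n + 1 - 2 * z ^ i - q * z ^ (i - 1)"
        using p_pos p_plus_q by (simp add: z_def)
      also have "\<dots> \<le> z ^ n - z ^ i"
      proof -
        have "1 \<le> z ^ i" "0 \<le> q * z ^ (i - 1)" using z q_pos by (simp_all add: one_le_power)
        then show ?thesis by linarith
      qed
      finally show ?thesis unfolding z_def .
    qed
  }
qed

definition exp_steps :: "nat \<Rightarrow> real" where
  "exp_steps i = lim (\<lambda>N. steps N i)"

lemma steps_LIMSEQ: "i \<le> n \<Longrightarrow> (\<lambda>N. steps N i) \<longlonglongrightarrow> exp_steps i"
  unfolding exp_steps_def using incseq_steps steps_le by (blast intro: incseq_LIMSEQ_lim)

lemma exp_steps_0: "exp_steps 0 = 0"
proof -
  have "(\<lambda>N. steps N 0) = (\<lambda>N. 0)"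
    by (rule ext, case_tac N) (simp_all add: steps_Suc)
  then show ?thesis by (simp add: exp_steps_def)
qed

lemma exp_steps_n: "exp_steps n = 0"
proof -
  have "(\<lambda>N. steps N n) = (\<lambda>N. 0)"
    by (rule ext, case_tac N) (simp_all add: steps_Suc)
  then show ?thesis by (simp add: exp_steps_def)
qed

lemma exp_steps_rec:
  assumes "0 < i" "i < n"
  shows "exp_steps i = 1 + p * exp_steps (Suc i) + q * exp_steps (i - 1)"
proof (rule LIMSEQ_unique)
  show "(\<lambda>N. steps (Suc N) i) \<longlonglongrightarrow> exp_steps i"
    using steps_LIMSEQ assms by (intro LIMSEQ_Suc) simp
  show "(\<lambda>N. steps (Suc N) i) \<longlonglongrightarrow> 1 + p * exp_steps (Suc i) + q * exp_steps (i - 1)"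
    using assms by (simp add: steps_Suc up_st_less down_st_eq) (intro tendsto_intros steps_LIMSEQ, auto)
qed

lemma theta_eq: "theta lam mu n = q * hit0_prob (n - 1)"
proof -
  have "(\<lambda>N. p * hit0 N (up_st n n) + q * hit0 N (down_st n n)) \<longlonglongrightarrow> p * hit0_prob n + q * hit0_prob (n - 1)"
    by (simp add: up_st_def down_st_eq) (intro tendsto_intros hit0_LIMSEQ)
  then show ?thesis
    unfolding theta_def p_def[symmetric] q_def[symmetric] using hit0_prob_n by (simp add: limI)
qed

lemma Tsteps_eq: "Tsteps lam mu n = 1 + q * exp_steps (n - 1)"
proof -
  have "(\<lambda>N. 1 + p * steps N (up_st n n) + q * steps N (down_st n n))
      \<longlonglongrightarrow> 1 + p * exp_steps n + q * exp_steps (n - 1)"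
    by (simp add: up_st_def down_st_eq) (intro tendsto_intros steps_LIMSEQ, auto)
  then show ?thesis
    unfolding Tsteps_def p_def[symmetric] q_def[symmetric] using exp_steps_n by (simp add: limI)
qed

lemma D_eq: "D lam mu c r n = q * (r * hit0_prob (n - 1) - cost * exp_steps (n - 1)) - cost"
  unfolding D_def theta_eq Tsteps_eq cost_def[symmetric] by (simp add: algebra_simps)


text \<open>threshold_value is the payoff of the threshold strategy against the worst behaviour (arrivals
  ahead, nobody reneging); value_at_threshold is its value at n, forced by the recursion at n.\<close>

definition value_at_threshold :: real where
  "value_at_threshold = D lam mu c r n / (1 - q * (1 - hit0_prob (n - 1)))"

definition threshold_value :: "nat \<Rightarrow> real" where
  "threshold_value j = (if j \<le> n
     then r * hit0_prob j - cost * exp_steps j + value_at_threshold * (1 - hit0_prob j) else 0)"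

lemma value_at_threshold_denominator_pos: "0 < 1 - q * (1 - hit0_prob (n - 1))"
proof -
  have "q * (1 - hit0_prob (n - 1)) \<le> q * 1"
    using hit0_prob_bounds q_pos by (intro mult_left_mono) auto
  then show ?thesis using q_less_1 by simp
qed

lemma zero_le_value_at_threshold_iff: "0 \<le> value_at_threshold \<longleftrightarrow> 0 \<le> D lam mu c r n"
  using value_at_threshold_denominator_pos by (simp add: value_at_threshold_def zero_le_divide_iff)

lemma zero_less_value_at_threshold_iff: "0 < value_at_threshold \<longleftrightarrow> 0 < D lam mu c r n"
  using value_at_threshold_denominator_pos by (simp add: value_at_threshold_def zero_less_divide_iff)

lemma threshold_value_0: "threshold_value 0 = r"
  by (simp add: threshold_value_def hit0_prob_0 exp_steps_0)

lemma threshold_value_n: "threshold_value n = value_at_threshold"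
  by (simp add: threshold_value_def hit0_prob_n exp_steps_n)

lemma threshold_value_rec:
  assumes "1 \<le> j" "j \<le> n"
  shows "threshold_value j = - cost + p * threshold_value (Suc j) + q * threshold_value (j - 1)"
proof (cases "j = n")
  case True
  have "value_at_threshold * (1 - q * (1 - hit0_prob (n - 1))) = D lam mu c r n"
    using value_at_threshold_denominator_pos by (simp add: value_at_threshold_def)
  then show ?thesis
    using True by (simp add: threshold_value_def hit0_prob_n exp_steps_n D_eq algebra_simps)
next
  case False
  then have j: "0 < j" "j < n" using assms by auto
  have q: "q = 1 - p" using p_plus_q by simp
  have "threshold_value i = r * hit0_prob i - cost * exp_steps i + value_at_threshold * (1 - hit0_prob i)"
    if "i \<le> n" for i
    using that by (simp add: threshold_value_def)
  then have "threshold_value j = r * hit0_prob j - cost * exp_steps j + value_at_threshold * (1 - hit0_prob j)"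
    and "threshold_value (Suc j) = r * hit0_prob (Suc j) - cost * exp_steps (Suc j)
           + value_at_threshold * (1 - hit0_prob (Suc j))"
    and "threshold_value (j - 1) = r * hit0_prob (j - 1) - cost * exp_steps (j - 1)
           + value_at_threshold * (1 - hit0_prob (j - 1))"
    using j by simp_all
  then show ?thesis
    by (simp only: hit0_prob_rec[OF j] exp_steps_rec[OF j] q) (simp add: algebra_simps)
qed

lemma antimono_threshold_value:
  assumes "0 \<le> D lam mu c r n"
  shows "antimono threshold_value"
proof (rule decseq_SucI)
  fix j
  show "threshold_value (Suc j) \<le> threshold_value j"
  proof (cases "j \<le> n")
    case True
    then show ?thesis
    proof (induction rule: inc_induct)
      case base
      have "threshold_value (Suc n) = 0" by (simp add: threshold_value_def)
      then show ?case
        using assms threshold_value_n zero_le_value_at_threshold_iff by simp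
    next
      case (step i)
      have "threshold_value (Suc i) = - cost + p * threshold_value (Suc (Suc i)) + q * threshold_value i"
        using threshold_value_rec[of "Suc i"] step.hyps by simp
      then have "q * (threshold_value i - threshold_value (Suc i))
          = p * (threshold_value (Suc i) - threshold_value (Suc (Suc i))) + cost"
        by (simp add: q_eq algebra_simps)
      moreover have "0 \<le> p * (threshold_value (Suc i) - threshold_value (Suc (Suc i)))"
        using step.IH p_pos by simp
      ultimately have "0 < q * (threshold_value i - threshold_value (Suc i))"
        using cost_pos by linarith
      then show ?case using q_pos by (simp add: zero_less_mult_iff)
    qed
  next
    case False
    then show ?thesis by (simp add: threshold_value_def)
  qed
qed

lemma threshold_subsolution_threshold_value:
  assumes "0 \<le> D lam mu c r n"
  shows "threshold_subsolution threshold_value"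
  using antimono_threshold_value[OF assms] threshold_value_rec
  by (simp add: threshold_subsolution_def threshold_value_0) (simp add: threshold_value_def)

end

theorem lemma2:
  fixes lam mu c r :: real and nstar :: nat
  assumes "lam > 0" and "mu > 0" and "c > 0" and "r > 0"
    and "opt_threshold lam mu c r nstar"
  shows "\<forall>k. 1 \<le> k \<and> k \<le> nstar \<longrightarrow>
           (\<forall>A :: adversary. \<exists>\<sigma> :: tstrategy. \<not> \<sigma> [] \<and>
              (\<exists>L. has_payoff lam mu c r \<sigma> A k L \<and> L \<ge> 0)
              \<and> (D lam mu c r nstar > 0 \<longrightarrow> (\<exists>L. has_payoff lam mu c r \<sigma> A k L \<and> L > 0)))"
proof (intro allI impI)
  fix k :: nat and A :: adversary
  assume k: "1 \<le> k \<and> k \<le> nstar"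
  interpret threshold_customer lam mu c r nstar
    using assms k by unfold_locales auto
  have D_nonneg: "0 \<le> D lam mu c r nstar"
    using assms(5) by (simp add: opt_threshold_def)
  obtain L where L: "has_payoff lam mu c r (threshold_strategy nstar k) A k L" "threshold_value k \<le> L"
    using has_payoff_threshold_ge[OF threshold_subsolution_threshold_value[OF D_nonneg]] k by blast
  have "value_at_threshold \<le> L"
    using antimonoD[OF antimono_threshold_value[OF D_nonneg]] k L(2) threshold_value_n
    by (metis order_trans)
  moreover have "\<not> threshold_strategy nstar k []"
    using k by (simp add: threshold_strategy_def)
  ultimately show "\<exists>\<sigma> :: tstrategy. \<not> \<sigma> [] \<and>
              (\<exists>L. has_payoff lam mu c r \<sigma> A k L \<and> L \<ge> 0)
              \<and> (D lam mu c r nstar > 0 \<longrightarrow> (\<exists>L. has_payoff lam mu c r \<sigma> A k L \<and> L > 0))"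
    using L(1) D_nonneg zero_le_value_at_threshold_iff zero_less_value_at_threshold_iff
    by (intro exI[of _ "threshold_strategy nstar k"]) auto
qed

end
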